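(* Let $Y\subset B^+$ and $Z\subset A^+$ be finite composable sets with bijection $\beta:B\to Z$, and let $X=Y\circ_\beta Z$ be a trim decomposition. Let $\mathcal{B}=(Q,1,1)$ be the prefix automaton of $Y$ (over $B$), let $\mathcal{T}=(P,1,1)$ be the prefix transducer of $Z$ with respect to $\beta$, and let $\mathcal{A}=\mathcal{B}\circ\mathcal{T}$. Then: (a) $\mathcal{A}$ recognizes $X^*$ with multiplicities, i.e. for every $w\in A^*$ the number of paths from $(1,1)$ to $(1,1)$ in $\mathcal{A}$ labeled $w$ equals the number of factorizations of $w$ into words of $X$. (b) If $Y$ is complete, then the map $\rho:Q\times P\to P$, $\rho(q,p)=p$, is a reduction from $\mathcal{A}$ onto the prefix automaton of $Z$. (c) For $q,q'\in Q$ and $b\in B$, there is an edge $q\xrightarrow{b}q'$ in $\mathcal{B}$ if and only if there is a path in $\mathcal{A}$ from $(q,1)$ to $(q',1)$ labeled $\beta(b)$ all of whose intermediate states lie outside $\rho^{-1}(1)=Q\times\{1\}$.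
   Context: Two finite sets $Y\subset B^*$, $Z\subset A^*$ are composable if there is a bijection $\beta:B\to Z$ and every letter of $B$ occurs in some word of $Y$; extending $\beta$ to a morphism $B^*\to A^*$, $X=\beta(Y)$ is the composition $Y\circ_\beta Z$. The decomposition is trim if the restriction of $\beta$ to $Y$ is injective. A set $Y\subset B^*$ is complete if every word of $B^*$ is a factor of some word of $Y^*$. The prefix automaton of a finite set $X\subset A^+$ has as states the proper prefixes of words of $X$ (including the empty word $1$, which is initial and terminal), edges $p\xrightarrow{a}pa$ whenever $pa$ is a proper prefix of a word of $X$, and edges $p\xrightarrow{a}1$ whenever $pa\in X$. The prefix transducer of $Z$ (w.r.t. $\beta$) has the states $P$ of the prefix automaton of $Z$, edges $p\xrightarrow{a|1}pa$ when $pa\in P$, and edges $p\xrightarrow{a|b}1$ when $pa=\beta(b)\in Z$. The automaton $\mathcal{B}\circ\mathcal{T}$ (wreath product) has state set $Q\times P$, initial and terminal state $(1,1)$, and an edge $(q,p)\xrightarrow{a}(q',p')$ whenever $\mathcal{T}$ has an edge $p\xrightarrow{a|w}p'$ and either $w=1$ and $q'=q$, or $w=b\in B$ and $\mathcal{B}$ has an edge $q\xrightarrow{b}q'$. Recognition with multiplicities: the number of paths from initial to terminal state labeled $w$ equals the number of factorizations of $w$ into words of $X$. A reduction from $(P_1,i,t)$ onto $(Q_1,j,u)$ is a surjective map $\rho$ with $\rho(i)=j$, $\rho(t)=u$, such that for all states $q,q'$ and words $w$, there is a path $q\xrightarrow{w}q'$ in the target iff there is a path $p\xrightarrow{w}p'$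 in the source with $\rho(p)=q$, $\rho(p')=q'$. *)

theory Defs
  imports Main "HOL-Library.Sublist"
begin

text \<open>Words are lists; the empty word 1 is []. Automata are given by a state set
and an edge set of triples (source, letter, target).\<close>

definition prefix_states :: "'a list set \<Rightarrow> 'a list set" where
  "prefix_states X = {p. \<exists>x\<in>X. \<exists>u. u \<noteq> [] \<and> p @ u = x}"

definition prefix_edges :: "'a list set \<Rightarrow> ('a list \<times> 'a \<times> 'a list) set" where
  "prefix_edges X =
     {(p, a, p @ [a]) | p a. p \<in> prefix_states X \<and> p @ [a] \<in> prefix_states X}
   \<union> {(p, a, []) | p a. p \<in> prefix_states X \<and> p @ [a] \<in> X}"

text \<open>Prefix transducer of Z w.r.t. beta; output None stands for the empty word 1,
Some b for the letter b.\<close>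
definition prefix_transducer_edges ::
  "('b \<Rightarrow> 'a list) \<Rightarrow> 'a list set \<Rightarrow> ('a list \<times> 'a \<times> 'b option \<times> 'a list) set" where
  "prefix_transducer_edges \<beta> Z =
     {(p, a, None, p @ [a]) | p a. p \<in> prefix_states Z \<and> p @ [a] \<in> prefix_states Z}
   \<union> {(p, a, Some b, []) | p a b. p \<in> prefix_states Z \<and> p @ [a] = \<beta> b \<and> \<beta> b \<in> Z}"

definition wreath_edges ::
  "'q set \<Rightarrow> ('q \<times> 'b \<times> 'q) set \<Rightarrow> ('p \<times> 'a \<times> 'b option \<times> 'p) set
   \<Rightarrow> (('q \<times> 'p) \<times> 'a \<times> ('q \<times> 'p)) set" where
  "wreath_edges Q EB ET =
     {((q, p), a, (q, p')) | q p a p'. q \<in> Q \<and> (p, a, None, p') \<in> ET}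
   \<union> {((q, p), a, (q', p')) | q p a b q' p'. (p, a, Some b, p') \<in> ET \<and> (q, b, q') \<in> EB}"

definition run :: "('s \<times> 'c \<times> 's) set \<Rightarrow> 's list \<Rightarrow> 'c list \<Rightarrow> bool" where
  "run E ss w \<longleftrightarrow> length ss = Suc (length w) \<and>
     (\<forall>i < length w. (ss ! i, w ! i, ss ! Suc i) \<in> E)"

definition has_path :: "('s \<times> 'c \<times> 's) set \<Rightarrow> 's \<Rightarrow> 'c list \<Rightarrow> 's \<Rightarrow> bool" where
  "has_path E s w t \<longleftrightarrow> (\<exists>ss. run E ss w \<and> hd ss = s \<and> last ss = t)"

definition num_paths :: "('s \<times> 'c \<times> 's) set \<Rightarrow> 's \<Rightarrow> 'c list \<Rightarrow> 's \<Rightarrow> nat" where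
  "num_paths E s w t = card {ss. run E ss w \<and> hd ss = s \<and> last ss = t}"

definition num_factorizations :: "'a list set \<Rightarrow> 'a list \<Rightarrow> nat" where
  "num_factorizations X w = card {xs. xs \<in> lists X \<and> concat xs = w}"

definition reduction ::
  "('s \<Rightarrow> 'r) \<Rightarrow> 's set \<Rightarrow> ('s \<times> 'c \<times> 's) set \<Rightarrow> 's \<Rightarrow> 's
   \<Rightarrow> 'r set \<Rightarrow> ('r \<times> 'c \<times> 'r) set \<Rightarrow> 'r \<Rightarrow> 'r \<Rightarrow> bool" where
  "reduction \<rho> S1 E1 i t S2 E2 j u \<longleftrightarrow>
     \<rho> ` S1 = S2 \<and> \<rho> i = j \<and> \<rho> t = u \<and>
     (\<forall>q\<in>S2. \<forall>q'\<in>S2. \<forall>w. has_path E2 q w q' \<longleftrightarrow>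
        (\<exists>p\<in>S1. \<exists>p'\<in>S1. \<rho> p = q \<and> \<rho> p' = q' \<and> has_path E1 p w p'))"

definition composable :: "'b list set \<Rightarrow> 'a list set \<Rightarrow> ('b \<Rightarrow> 'a list) \<Rightarrow> bool" where
  "composable Y Z \<beta> \<longleftrightarrow> finite Y \<and> finite Z \<and> bij_betw \<beta> UNIV Z \<and>
     (\<forall>b. \<exists>y\<in>Y. b \<in> set y)"

definition compose :: "'b list set \<Rightarrow> ('b \<Rightarrow> 'a list) \<Rightarrow> 'a list set" where
  "compose Y \<beta> = (\<lambda>y. concat (map \<beta> y)) ` Y"

definition trim :: "'b list set \<Rightarrow> ('b \<Rightarrow> 'a list) \<Rightarrow> bool" where
  "trim Y \<beta> \<longleftrightarrow> inj_on (\<lambda>y. concat (map \<beta> y)) Y"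

definition complete :: "'b list set \<Rightarrow> bool" where
  "complete Y \<longleftrightarrow> (\<forall>u. \<exists>ys\<in>lists Y. sublist u (concat ys))"

end

(*
  A run of the wreath product B o T that starts and ends in states with second component 1
  (the empty word) splits, at its visits to such states, into blocks; a block from (q,1) to
  (q',1) reads exactly a word beta(b) with q -b-> q' an edge of B, which is (c). Consequently a
  first return to (1,1) reads beta(y) for some y in Y, unique by trimness, so cutting runs at
  their first return gives the same recursion as cutting factorizations at their first factor,
  which is (a). For (b), forgetting the first component maps runs of B o T onto runs of the
  prefix automaton of Z; conversely a run of the latter lifts as soon as B can read the output
  of the transducer along it, and completeness of Y provides such a run of B.
*)

theory Submission
  imports Defs
begin

lemma run_length: "run E ss w \<Longrightarrow> length ss = Suc (length w)"
  unfolding run_def by simp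

lemma run_not_Nil: "run E ss w \<Longrightarrow> ss \<noteq> []"
  unfolding run_def by auto

lemma nth_length_run: "run E ss w \<Longrightarrow> ss ! length w = last ss"
  unfolding run_def by (cases ss rule: rev_cases) (auto simp: nth_append)

lemma run_Nil_iff: "run E ss [] \<longleftrightarrow> (\<exists>s. ss = [s])"
  unfolding run_def by (auto simp: length_Suc_conv)

lemma run_Cons_iff:
  "run E (s # ss) (a # w) \<longleftrightarrow> ss \<noteq> [] \<and> (s, a, hd ss) \<in> E \<and> run E ss w"
proof
  assume r: "run E (s # ss) (a # w)"
  then have "ss \<noteq> []" "length ss = Suc (length w)" unfolding run_def by auto
  with r show "ss \<noteq> [] \<and> (s, a, hd ss) \<in> E \<and> run E ss w"
    unfolding run_def by (fastforce simp: hd_conv_nth)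
next
  assume "ss \<noteq> [] \<and> (s, a, hd ss) \<in> E \<and> run E ss w"
  then show "run E (s # ss) (a # w)"
    unfolding run_def by (auto simp: hd_conv_nth less_Suc_eq_0_disj)
qed

lemma run_append:
  "run E r1 w1 \<Longrightarrow> run E r2 w2 \<Longrightarrow> last r1 = hd r2 \<Longrightarrow> run E (r1 @ tl r2) (w1 @ w2)"
proof (induction w1 arbitrary: r1)
  case Nil
  then show ?case using run_not_Nil[OF Nil(2)] by (cases r2) (auto simp: run_Nil_iff)
next
  case (Cons a w1)
  then obtain s r1' where "r1 = s # r1'" using run_not_Nil by (cases r1) auto
  with Cons show ?case by (auto simp: run_Cons_iff)
qed

lemma run_take: "run E ss w \<Longrightarrow> k \<le> length w \<Longrightarrow> run E (take (Suc k) ss) (take k w)"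
  unfolding run_def by auto

lemma run_drop: "run E ss w \<Longrightarrow> k \<le> length w \<Longrightarrow> run E (drop k ss) (drop k w)"
  unfolding run_def by (auto simp: add.commute)

lemma finite_runs_from:
  assumes "finite S" and "\<And>s a t. (s, a, t) \<in> E \<Longrightarrow> t \<in> S"
  shows "finite {ss. run E ss w \<and> hd ss = s}"
proof (rule finite_subset)
  have "set ss \<subseteq> insert s S" if r: "run E ss w" and h: "hd ss = s" for ss
  proof
    fix x assume "x \<in> set ss"
    then obtain i where i: "i < length ss" "ss ! i = x" by (auto simp: in_set_conv_nth)
    show "x \<in> insert s S"
    proof (cases i)
      case 0
      then show ?thesis using i run_not_Nil[OF r] h by (simp add: hd_conv_nth)
    next
      case (Suc j)
      then have "(ss ! j, w ! j, ss ! i) \<in> E" using r i unfolding run_def by auto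
      then show ?thesis using assms(2) i by auto
    qed
  qed
  then show "{ss. run E ss w \<and> hd ss = s} \<subseteq> {ss. set ss \<subseteq> insert s S \<and> length ss = Suc (length w)}"
    by (auto simp: run_length)
  show "finite {ss. set ss \<subseteq> insert s S \<and> length ss = Suc (length w)}"
    using assms(1) by (intro finite_lists_length_eq) auto
qed

lemma exists_least_positive:
  fixes P :: "nat \<Rightarrow> bool"
  assumes "P n" and "0 < n"
  obtains k where "0 < k" "k \<le> n" "P k" "\<And>i. 0 < i \<Longrightarrow> i < k \<Longrightarrow> \<not> P i"
proof
  define k where "k = (LEAST k. 0 < k \<and> P k)"
  show "0 < k" "P k" using LeastI[of "\<lambda>k. 0 < k \<and> P k" n] assms unfolding k_def by auto
  show "k \<le> n" using Least_le[of "\<lambda>k. 0 < k \<and> P k" n] assms unfolding k_def by auto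
  show "\<not> P i" if "0 < i" "i < k" for i
    using not_less_Least[of i "\<lambda>k. 0 < k \<and> P k"] that unfolding k_def by auto
qed

definition returns :: "('s \<times> 'c \<times> 's) set \<Rightarrow> 's \<Rightarrow> 'c list \<Rightarrow> 's list set" where
  "returns E s w = {ss. run E ss w \<and> hd ss = s \<and> last ss = s}"

definition first_returns :: "('s \<times> 'c \<times> 's) set \<Rightarrow> 's \<Rightarrow> 'c list \<Rightarrow> 's list set" where
  "first_returns E s w = {ss \<in> returns E s w. \<forall>i. 0 < i \<and> i < length w \<longrightarrow> ss ! i \<noteq> s}"

lemma num_paths_returns: "num_paths E s w s = card (returns E s w)"
  unfolding num_paths_def returns_def ..

lemma first_return_append_nth:
  assumes "r1 \<in> first_returns E s (take k w)" and "k \<le> length w"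
  shows "(r1 @ r2) ! k = s" and "0 < i \<Longrightarrow> i < k \<Longrightarrow> (r1 @ r2) ! i \<noteq> s"
proof -
  have r1: "run E r1 (take k w)" "last r1 = s"
    using assms(1) by (auto simp: first_returns_def returns_def)
  then have l: "length r1 = Suc k" using assms(2) by (simp add: run_length)
  have "r1 ! k = s" using nth_length_run[OF r1(1)] r1(2) assms(2) by simp
  then show "(r1 @ r2) ! k = s" using l by (simp add: nth_append)
  show "(r1 @ r2) ! i \<noteq> s" if "0 < i" "i < k"
    using assms that l by (auto simp: first_returns_def nth_append)
qed

lemma returns_split_at_first_return:
  assumes "w \<noteq> []"
  shows "returns E s w = (\<Union>k\<in>{1..length w}. (\<lambda>(r1, r2). r1 @ tl r2) `
           (first_returns E s (take k w) \<times> returns E s (drop k w)))"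
proof (intro equalityI subsetI)
  fix ss assume ss: "ss \<in> returns E s w"
  then have r: "run E ss w" and h: "hd ss = s" and la: "last ss = s"
    by (auto simp: returns_def)
  have l: "length ss = Suc (length w)" using run_length[OF r] .
  have "ss ! length w = s" using la nth_length_run[OF r] by simp
  then obtain k where k: "0 < k" "k \<le> length w" "ss ! k = s"
    and avoid: "\<And>i. 0 < i \<Longrightarrow> i < k \<Longrightarrow> ss ! i \<noteq> s"
    using exists_least_positive[of "\<lambda>i. ss ! i = s"] assms by blast
  have "take (Suc k) ss \<in> first_returns E s (take k w)"
    using run_take[OF r k(2)] h k l avoid run_not_Nil[OF r]
    by (auto simp: first_returns_def returns_def last_conv_nth min_def)
  moreover have "drop k ss \<in> returns E s (drop k w)"
    using run_drop[OF r k(2)] la k l by (auto simp: returns_def hd_drop_conv_nth)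
  moreover have "ss = take (Suc k) ss @ tl (drop k ss)"
    by (metis append_take_drop_id drop_Suc tl_drop)
  ultimately show "ss \<in> (\<Union>k\<in>{1..length w}. (\<lambda>(r1, r2). r1 @ tl r2) `
           (first_returns E s (take k w) \<times> returns E s (drop k w)))"
    using k by force
next
  fix ss assume "ss \<in> (\<Union>k\<in>{1..length w}. (\<lambda>(r1, r2). r1 @ tl r2) `
           (first_returns E s (take k w) \<times> returns E s (drop k w)))"
  then obtain k r1 r2 where r1: "r1 \<in> first_returns E s (take k w)"
    and r2: "r2 \<in> returns E s (drop k w)" and ss: "ss = r1 @ tl r2" by auto
  then have "run E ss w"
    using run_append[of E r1 "take k w" r2 "drop k w"] by (auto simp: first_returns_def returns_def)
  moreover have "hd ss = s" using r1 run_not_Nil[of E r1] unfolding ss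
    by (auto simp: first_returns_def returns_def)
  moreover have "last ss = s" using r1 r2 unfolding ss
    by (cases "tl r2 = []") (auto simp: first_returns_def returns_def last_tl)
  ultimately show "ss \<in> returns E s w" by (simp add: returns_def)
qed

theorem card_returns_first_return_decomposition:
  assumes fin: "\<And>w. finite {ss. run E ss w \<and> hd ss = s}" and "w \<noteq> []"
  shows "card (returns E s w) =
    (\<Sum>k\<in>{1..length w}. card (first_returns E s (take k w)) * card (returns E s (drop k w)))"
proof -
  let ?glue = "\<lambda>(r1, r2). r1 @ tl r2"
  have fin_returns: "finite (returns E s u)" for u
    by (rule finite_subset[OF _ fin[of u]]) (auto simp: returns_def)
  have fin_first: "finite (first_returns E s u)" for u
    by (rule finite_subset[OF _ fin_returns[of u]]) (auto simp: first_returns_def)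
  have inj: "inj_on ?glue (first_returns E s (take k w) \<times> returns E s (drop k w))"
    if "k \<le> length w" for k
  proof (rule inj_onI, clarify)
    fix a b c d
    assume ac: "a \<in> first_returns E s (take k w)" "c \<in> first_returns E s (take k w)"
      and bd: "b \<in> returns E s (drop k w)" "d \<in> returns E s (drop k w)"
      and eq: "a @ tl b = c @ tl d"
    have "length a = length c" using ac by (auto simp: first_returns_def returns_def run_length)
    then have "a = c" "tl b = tl d" using eq by auto
    moreover have "b \<noteq> []" "d \<noteq> []" "hd b = hd d" using bd run_not_Nil by (auto simp: returns_def)
    ultimately show "a = c \<and> b = d" by (metis list.collapse)
  qed
  have disjoint: "?glue ` (first_returns E s (take i w) \<times> returns E s (drop i w)) \<inter>
      ?glue ` (first_returns E s (take j w) \<times> returns E s (drop j w)) = {}"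
    if "i \<in> {1..length w}" "j \<in> {1..length w}" "i < j" for i j
  proof -
    have "r1 @ tl r2 \<noteq> r1' @ tl r2'"
      if "r1 \<in> first_returns E s (take i w)" "r1' \<in> first_returns E s (take j w)" for r1 r2 r1' r2'
      using first_return_append_nth(1)[OF that(1), of "tl r2"]
        first_return_append_nth(2)[OF that(2), of i "tl r2'"] \<open>i \<in> _\<close> \<open>j \<in> _\<close> \<open>i < j\<close>
      by auto
    then show ?thesis by fastforce
  qed
  have "card (returns E s w) =
      (\<Sum>k\<in>{1..length w}. card (?glue ` (first_returns E s (take k w) \<times> returns E s (drop k w))))"
    unfolding returns_split_at_first_return[OF assms(2)]
  proof (rule card_UN_disjoint)
    show "\<forall>i\<in>{1..length w}. \<forall>j\<in>{1..length w}. i \<noteq> j \<longrightarrow>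
      ?glue ` (first_returns E s (take i w) \<times> returns E s (drop i w)) \<inter>
      ?glue ` (first_returns E s (take j w) \<times> returns E s (drop j w)) = {}"
      using disjoint by (metis inf_commute linorder_neqE_nat)
  qed (use fin_first fin_returns in auto)
  also have "\<dots> = (\<Sum>k\<in>{1..length w}. card (first_returns E s (take k w)) * card (returns E s (drop k w)))"
    by (rule sum.cong) (auto simp: card_image[OF inj] card_cartesian_product)
  finally show ?thesis .
qed

lemma length_le_length_concat: "[] \<notin> set xs \<Longrightarrow> length xs \<le> length (concat xs)"
proof (induction xs)
  case (Cons x xs)
  then have "1 \<le> length x" by (cases x) auto
  with Cons show ?case by simp
qed simp

lemma finite_factorizations:
  assumes "finite X" "[] \<notin> X"
  shows "finite {xs. xs \<in> lists X \<and> concat xs = w}"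
  by (rule finite_subset[OF _ finite_lists_length_le[OF assms(1), of "length w"]])
     (use assms(2) length_le_length_concat in fastforce)

lemma num_factorizations_first_factor:
  assumes "finite X" "[] \<notin> X" "w \<noteq> []"
  shows "num_factorizations X w =
    (\<Sum>k\<in>{1..length w}. (if take k w \<in> X then 1 else 0) * num_factorizations X (drop k w))"
proof -
  define F where "F u = {xs. xs \<in> lists X \<and> concat xs = u}" for u
  let ?K = "{k \<in> {1..length w}. take k w \<in> X}"
  have split: "F w = (\<Union>k\<in>?K. Cons (take k w) ` F (drop k w))"
  proof (intro equalityI subsetI)
    fix xs assume "xs \<in> F w"
    then obtain x xs' where xs: "xs = x # xs'" "x \<in> X" "xs' \<in> lists X" "w = x @ concat xs'"
      using assms(3) by (cases xs) (auto simp: F_def)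
    then have "length x \<in> ?K" using assms(2) by (auto simp: Suc_le_eq)
    moreover have "xs' \<in> F (drop (length x) w)" using xs by (simp add: F_def)
    ultimately show "xs \<in> (\<Union>k\<in>?K. Cons (take k w) ` F (drop k w))" using xs by force
  qed (auto simp: F_def)
  have "card (F w) = (\<Sum>k\<in>?K. card (Cons (take k w) ` F (drop k w)))"
    unfolding split
  proof (rule card_UN_disjoint)
    show "\<forall>i\<in>?K. \<forall>j\<in>?K. i \<noteq> j \<longrightarrow> Cons (take i w) ` F (drop i w) \<inter> Cons (take j w) ` F (drop j w) = {}"
      by (auto dest: arg_cong[of _ _ length])
  qed (auto simp: F_def finite_factorizations[OF assms(1,2)])
  also have "\<dots> = (\<Sum>k\<in>?K. card (F (drop k w)))"
    by (rule sum.cong) (auto simp: card_image)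
  also have "\<dots> = (\<Sum>k\<in>{1..length w}. (if take k w \<in> X then 1 else 0) * card (F (drop k w)))"
    by (subst sum.inter_filter) (auto intro: sum.cong)
  finally show ?thesis unfolding num_factorizations_def F_def .
qed

lemma prefix_edges_iff:
  "(p, a, p') \<in> prefix_edges X \<longleftrightarrow> p \<in> prefix_states X \<and>
     (p' = p @ [a] \<and> p @ [a] \<in> prefix_states X \<or> p' = [] \<and> p @ [a] \<in> X)"
  unfolding prefix_edges_def by auto

lemma take_in_prefix_states: "x \<in> X \<Longrightarrow> i < length x \<Longrightarrow> take i x \<in> prefix_states X"
  unfolding prefix_states_def by (auto intro!: bexI[of _ x] exI[of _ "drop i x"])

lemma Nil_in_prefix_states: "x \<in> X \<Longrightarrow> x \<noteq> [] \<Longrightarrow> [] \<in> prefix_states X"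
  using take_in_prefix_states[of x X 0] by simp

lemma prefix_states_subset: "prefix_states X \<subseteq> (\<Union>x\<in>X. set (prefixes x))"
  unfolding prefix_states_def by (auto simp: prefix_def)

lemma finite_prefix_states: "finite X \<Longrightarrow> finite (prefix_states X)"
  by (rule finite_subset[OF prefix_states_subset]) simp

definition proper_prefixes :: "'a list \<Rightarrow> 'a list list" where
  "proper_prefixes u = map (\<lambda>i. take i u) [0..<length u]"

lemma length_proper_prefixes [simp]: "length (proper_prefixes u) = length u"
  by (simp add: proper_prefixes_def)

lemma nth_proper_prefixes [simp]: "i < length u \<Longrightarrow> proper_prefixes u ! i = take i u"
  by (simp add: proper_prefixes_def)

lemma hd_proper_prefixes: "u \<noteq> [] \<Longrightarrow> hd (proper_prefixes u) = []"
  by (simp add: proper_prefixes_def upt_conv_Cons)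

lemma proper_prefixes_not_Nil: "u \<noteq> [] \<Longrightarrow> proper_prefixes u \<noteq> []"
  by (simp add: proper_prefixes_def)

lemma run_prefix_edges:
  assumes "x \<in> X"
  shows "run (prefix_edges X) (proper_prefixes x @ [[]]) x"
  unfolding run_def
proof (intro conjI allI impI)
  fix i assume i: "i < length x"
  have step: "take i x @ [x ! i] = take (Suc i) x" using i by (simp add: take_Suc_conv_app_nth)
  show "((proper_prefixes x @ [[]]) ! i, x ! i, (proper_prefixes x @ [[]]) ! Suc i) \<in> prefix_edges X"
  proof (cases "Suc i < length x")
    case True
    then show ?thesis
      using i step take_in_prefix_states[OF assms] by (simp add: nth_append prefix_edges_iff)
  next
    case False
    then have "take (Suc i) x = x" by simp
    then show ?thesis
      using i step False assms take_in_prefix_states[OF assms] by (simp add: nth_append prefix_edges_iff)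
  qed
qed simp

lemma hd_concat_proper_prefixes: "hd (concat (map proper_prefixes xs) @ [[]]) = []"
proof (induction xs)
  case (Cons x xs)
  then show ?case by (cases x) (simp_all add: proper_prefixes_def upt_conv_Cons del: upt_Suc)
qed simp

lemma run_prefix_edges_concat:
  "xs \<in> lists X \<Longrightarrow> run (prefix_edges X) (concat (map proper_prefixes xs) @ [[]]) (concat xs)"
proof (induction xs)
  case Nil
  then show ?case by (simp add: run_Nil_iff)
next
  case (Cons x xs)
  let ?rest = "concat (map proper_prefixes xs) @ [[]]"
  have "run (prefix_edges X) ((proper_prefixes x @ [[]]) @ tl ?rest) (x @ concat xs)"
    using Cons by (intro run_append run_prefix_edges) (auto simp: hd_concat_proper_prefixes)
  moreover have "?rest = [] # tl ?rest"
    using hd_concat_proper_prefixes[of xs] by (metis list.collapse snoc_eq_iff_butlast)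
  ultimately show ?case by (metis append.assoc append_Cons append_Nil concat.simps(2) list.simps(9))
qed

lemma set_concat_proper_prefixes:
  "xs \<in> lists X \<Longrightarrow> set (concat (map proper_prefixes xs)) \<subseteq> prefix_states X"
  by (auto simp: proper_prefixes_def intro: take_in_prefix_states)

(* The run of B o T reading beta(y) while B follows y from state q back to 1 (a genuine run when q @ y is in Y). *)
fun wreath_run :: "('b \<Rightarrow> 'a list) \<Rightarrow> 'b list \<Rightarrow> 'b list \<Rightarrow> ('b list \<times> 'a list) list" where
  "wreath_run \<beta> q [] = [([], [])]"
| "wreath_run \<beta> q (b # y) = map (Pair q) (proper_prefixes (\<beta> b)) @ wreath_run \<beta> (q @ [b]) y"

(* What the prefix transducer of Z outputs along a path of the prefix automaton of Z:
   the letter inv beta z each time the path returns to 1 after reading a word z of Z. *)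
fun transducer_output :: "('b \<Rightarrow> 'a list) \<Rightarrow> 'a list list \<Rightarrow> 'a list \<Rightarrow> 'b list" where
  "transducer_output \<beta> (p # p' # ps) (a # w) =
     (if p' = [] then [inv \<beta> (p @ [a])] else []) @ transducer_output \<beta> (p' # ps) w"
| "transducer_output \<beta> _ _ = []"

locale trim_composition =
  fixes Y :: "'b list set" and Z :: "'a list set" and \<beta> :: "'b \<Rightarrow> 'a list"
  assumes Nil_notin_Y: "[] \<notin> Y" and Nil_notin_Z: "[] \<notin> Z"
    and composable: "composable Y Z \<beta>" and trim: "trim Y \<beta>"
begin

abbreviation EW :: "(('b list \<times> 'a list) \<times> 'a \<times> ('b list \<times> 'a list)) set" where
  "EW \<equiv> wreath_edges (prefix_states Y) (prefix_edges Y) (prefix_transducer_edges \<beta> Z)"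

lemma finite_Y: "finite Y" and finite_Z: "finite Z" and bij_beta: "bij_betw \<beta> UNIV Z"
  and letter_occurs: "\<exists>y\<in>Y. b \<in> set y"
  using composable unfolding composable_def by auto

lemma inj_beta: "inj \<beta>"
  using bij_beta by (simp add: bij_betw_def)

lemma beta_in_Z: "\<beta> b \<in> Z"
  using bij_beta by (auto simp: bij_betw_def)

lemma beta_not_Nil: "\<beta> b \<noteq> []"
  using beta_in_Z[of b] Nil_notin_Z by auto

lemma beta_inv: "z \<in> Z \<Longrightarrow> \<beta> (inv \<beta> z) = z"
  using bij_beta by (metis bij_betw_imp_surj_on f_inv_into_f)

lemma Nil_in_prefix_states_Y: "[] \<in> prefix_states Y"
  using letter_occurs Nil_notin_Y Nil_in_prefix_states by blast

lemma Nil_in_prefix_states_Z: "[] \<in> prefix_states Z"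
  using beta_in_Z beta_not_Nil Nil_in_prefix_states by blast

lemma wreath_edges_iff:
  "((q, p), a, (q', p')) \<in> EW \<longleftrightarrow>
     q' = q \<and> p' = p @ [a] \<and> q \<in> prefix_states Y \<and> p \<in> prefix_states Z \<and> p @ [a] \<in> prefix_states Z \<or>
     p' = [] \<and> p \<in> prefix_states Z \<and> (\<exists>b. p @ [a] = \<beta> b \<and> (q, b, q') \<in> prefix_edges Y)"
  unfolding wreath_edges_def prefix_transducer_edges_def using beta_in_Z by auto

lemma wreath_edge_target: "(s, a, t) \<in> EW \<Longrightarrow> t \<in> prefix_states Y \<times> prefix_states Z"
  by (cases s; cases t)
    (auto simp: wreath_edges_iff prefix_edges_iff Nil_in_prefix_states_Y Nil_in_prefix_states_Z)

lemma finite_wreath_runs_from: "finite {ss. run EW ss w \<and> hd ss = s}"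
  using finite_prefix_states[OF finite_Y] finite_prefix_states[OF finite_Z] wreath_edge_target
  by (intro finite_runs_from[of "prefix_states Y \<times> prefix_states Z"]) auto

lemma run_wreath_block:
  assumes e: "(q, b, q') \<in> prefix_edges Y"
  shows "run EW (map (Pair q) (proper_prefixes (\<beta> b)) @ [(q', [])]) (\<beta> b)"
  unfolding run_def
proof (intro conjI allI impI)
  let ?u = "\<beta> b" and ?ss = "map (Pair q) (proper_prefixes (\<beta> b)) @ [(q', [])]"
  fix i assume i: "i < length ?u"
  have q: "q \<in> prefix_states Y" using e by (simp add: prefix_edges_iff)
  have step: "take i ?u @ [?u ! i] = take (Suc i) ?u" using i by (simp add: take_Suc_conv_app_nth)
  have si: "?ss ! i = (q, take i ?u)" using i by (simp add: nth_append)
  have p: "take i ?u \<in> prefix_states Z" using take_in_prefix_states[OF beta_in_Z i] .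
  show "(?ss ! i, ?u ! i, ?ss ! Suc i) \<in> EW"
  proof (cases "Suc i < length ?u")
    case True
    then show ?thesis
      using q p step take_in_prefix_states[OF beta_in_Z True] by (simp add: si nth_append wreath_edges_iff)
  next
    case False
    then have "take (Suc i) ?u = ?u" by simp
    then show ?thesis using i False p step e by (auto simp: si nth_append wreath_edges_iff)
  qed
qed simp

lemma wreath_block_path_shape:
  assumes r: "run EW ss u" and u: "u \<noteq> []" and h: "hd ss = (q, [])" and la: "last ss = (q', [])"
    and inside: "\<forall>i. 0 < i \<and> i < length u \<longrightarrow> snd (ss ! i) \<noteq> []"
  obtains b where "u = \<beta> b" "(q, b, q') \<in> prefix_edges Y"
    "ss = map (Pair q) (proper_prefixes u) @ [(q', [])]"
proof -
  let ?n = "length u"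
  have l: "length ss = Suc ?n" using run_length[OF r] .
  have before: "ss ! i = (q, take i u)" if "i < ?n" for i
    using that
  proof (induction i)
    case 0
    then show ?case using h run_not_Nil[OF r] by (simp add: hd_conv_nth)
  next
    case (Suc i)
    have e: "((q, take i u), u ! i, ss ! Suc i) \<in> EW"
      using r Suc unfolding run_def by (metis Suc_lessD)
    obtain q'' p'' where s: "ss ! Suc i = (q'', p'')" by fastforce
    have "p'' \<noteq> []" using inside Suc.prems s by (metis snd_conv zero_less_Suc)
    then show ?case using e Suc.prems by (simp add: s wreath_edges_iff take_Suc_conv_app_nth)
  qed
  have "ss ! ?n = (q', [])" using la nth_length_run[OF r] by simp
  moreover have "(ss ! (?n - 1), u ! (?n - 1), ss ! Suc (?n - 1)) \<in> EW"
    using r u unfolding run_def by (metis Suc_pred diff_less length_greater_0_conv zero_less_one)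
  ultimately have "((q, take (?n - 1) u), u ! (?n - 1), (q', [])) \<in> EW"
    using before u by simp
  moreover have "take (?n - 1) u @ [u ! (?n - 1)] = u"
    using u by (metis Suc_diff_1 hd_Cons_tl length_greater_0_conv lessI take_Suc_conv_app_nth take_all order.refl)
  ultimately obtain b where b: "u = \<beta> b" "(q, b, q') \<in> prefix_edges Y"
    by (auto simp: wreath_edges_iff)
  moreover have "ss = map (Pair q) (proper_prefixes u) @ [(q', [])]"
    by (rule nth_equalityI) (auto simp: l nth_append before \<open>ss ! ?n = (q', [])\<close> less_Suc_eq)
  ultimately show ?thesis using that by blast
qed

theorem prefix_edge_iff_wreath_block_path:
  "(q, b, q') \<in> prefix_edges Y \<longleftrightarrow>
    (\<exists>ss. run EW ss (\<beta> b) \<and> hd ss = (q, []) \<and> last ss = (q', []) \<and>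
       (\<forall>i. 0 < i \<and> i < length (\<beta> b) \<longrightarrow> snd (ss ! i) \<noteq> []))"
proof
  assume "(q, b, q') \<in> prefix_edges Y"
  moreover have "proper_prefixes (\<beta> b) \<noteq> []" using beta_not_Nil proper_prefixes_not_Nil by blast
  ultimately show "\<exists>ss. run EW ss (\<beta> b) \<and> hd ss = (q, []) \<and> last ss = (q', []) \<and>
       (\<forall>i. 0 < i \<and> i < length (\<beta> b) \<longrightarrow> snd (ss ! i) \<noteq> [])"
    using run_wreath_block beta_not_Nil[of b]
    by (intro exI[of _ "map (Pair q) (proper_prefixes (\<beta> b)) @ [(q', [])]"])
      (auto simp: nth_append hd_append hd_map hd_proper_prefixes)
next
  assume "\<exists>ss. run EW ss (\<beta> b) \<and> hd ss = (q, []) \<and> last ss = (q', []) \<and>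
       (\<forall>i. 0 < i \<and> i < length (\<beta> b) \<longrightarrow> snd (ss ! i) \<noteq> [])"
  then obtain b' where "\<beta> b = \<beta> b'" "(q, b', q') \<in> prefix_edges Y"
    using wreath_block_path_shape beta_not_Nil by metis
  then show "(q, b, q') \<in> prefix_edges Y" using inj_beta by (metis injD)
qed

lemma length_wreath_run: "length (wreath_run \<beta> q y) = Suc (length (concat (map \<beta> y)))"
  by (induction y arbitrary: q) auto

lemma hd_wreath_run: "y \<noteq> [] \<Longrightarrow> hd (wreath_run \<beta> q y) = (q, [])"
  using beta_not_Nil proper_prefixes_not_Nil
  by (cases y) (auto simp: hd_append hd_map hd_proper_prefixes)

lemma last_wreath_run: "last (wreath_run \<beta> q y) = ([], [])"
proof (induction y arbitrary: q)
  case (Cons b y)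
  have "wreath_run \<beta> (q @ [b]) y \<noteq> []" using length_wreath_run by (metis Zero_not_Suc list.size(3))
  with Cons show ?case by simp
qed simp

lemma run_wreath_run: "q @ y \<in> Y \<Longrightarrow> run EW (wreath_run \<beta> q y) (concat (map \<beta> y))"
proof (induction y arbitrary: q)
  case Nil
  then show ?case by (simp add: run_Nil_iff)
next
  case (Cons b y)
  have q: "q \<in> prefix_states Y"
    using Cons.prems unfolding prefix_states_def by auto
  show ?case
  proof (cases "y = []")
    case True
    then have "(q, b, []) \<in> prefix_edges Y" using q Cons.prems by (simp add: prefix_edges_iff)
    then show ?thesis using run_wreath_block True by simp
  next
    case False
    have "q @ [b] \<in> prefix_states Y"
      using Cons.prems False unfolding prefix_states_def by force
    then have "(q, b, q @ [b]) \<in> prefix_edges Y" using q by (simp add: prefix_edges_iff)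
    then have "run EW ((map (Pair q) (proper_prefixes (\<beta> b)) @ [(q @ [b], [])])
        @ tl (wreath_run \<beta> (q @ [b]) y)) (\<beta> b @ concat (map \<beta> y))"
      using Cons False by (intro run_append run_wreath_block) (auto simp: hd_wreath_run)
    moreover have "wreath_run \<beta> (q @ [b]) y = (q @ [b], []) # tl (wreath_run \<beta> (q @ [b]) y)"
      using hd_wreath_run[OF False] length_wreath_run by (metis list.collapse list.size(3) nat.distinct(1))
    ultimately show ?thesis by (metis append.assoc append_Cons append_Nil concat.simps(2) list.simps(9) wreath_run.simps(2))
  qed
qed

lemma wreath_run_avoids_origin:
  "0 < i \<Longrightarrow> i < length (concat (map \<beta> y)) \<Longrightarrow> wreath_run \<beta> q y ! i \<noteq> ([], [])"
proof (induction y arbitrary: q i)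
  case (Cons b y)
  show ?case
  proof (cases "i < length (\<beta> b)")
    case True
    then show ?thesis using Cons.prems by (auto simp: nth_append)
  next
    case False
    then have "wreath_run \<beta> q (b # y) ! i = wreath_run \<beta> (q @ [b]) y ! (i - length (\<beta> b))"
      by (simp add: nth_append)
    moreover have "y \<noteq> []" using False Cons.prems by auto
    then have "wreath_run \<beta> (q @ [b]) y ! 0 = (q @ [b], [])"
      using hd_wreath_run length_wreath_run by (metis hd_conv_nth list.size(3) nat.distinct(1))
    ultimately show ?thesis
      using Cons.IH[of "i - length (\<beta> b)" "q @ [b]"] Cons.prems False
      by (cases "i = length (\<beta> b)") auto
  qed
qed simp

lemma wreath_path_first_block:
  assumes r: "run EW ss w" and w: "w \<noteq> []" and h: "hd ss = (q, [])" and la: "snd (last ss) = []"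
  obtains k b q' where "0 < k" "k \<le> length w" "take k w = \<beta> b" "(q, b, q') \<in> prefix_edges Y"
    "ss ! k = (q', [])" "ss = map (Pair q) (proper_prefixes (\<beta> b)) @ drop k ss"
proof -
  have l: "length ss = Suc (length w)" using run_length[OF r] .
  have "snd (ss ! length w) = []" using la nth_length_run[OF r] by simp
  then obtain k where k: "0 < k" "k \<le> length w" "snd (ss ! k) = []"
    and before: "\<And>i. 0 < i \<Longrightarrow> i < k \<Longrightarrow> snd (ss ! i) \<noteq> []"
    using exists_least_positive[of "\<lambda>i. snd (ss ! i) = []" "length w"] w by auto
  obtain q' where sk: "ss ! k = (q', [])" using k(3) by (cases "ss ! k") auto
  obtain b where b: "take k w = \<beta> b" "(q, b, q') \<in> prefix_edges Y"
    and block: "take (Suc k) ss = map (Pair q) (proper_prefixes (take k w)) @ [(q', [])]"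
  proof (rule wreath_block_path_shape[OF run_take[OF r k(2)]])
    show "take k w \<noteq> []" using k w by simp
    show "hd (take (Suc k) ss) = (q, [])" using h run_not_Nil[OF r] by simp
    show "last (take (Suc k) ss) = (q', [])" using sk k l by (subst last_conv_nth) (auto simp: min_def)
    show "\<forall>i. 0 < i \<and> i < length (take k w) \<longrightarrow> snd (take (Suc k) ss ! i) \<noteq> []"
      using before by simp
  qed
  have "length (\<beta> b) = k" unfolding b(1)[symmetric] using k(2) by simp
  then have prefix: "take k ss = map (Pair q) (proper_prefixes (\<beta> b))"
    using arg_cong[OF block, of "take k"] b(1) by simp
  have "ss = map (Pair q) (proper_prefixes (\<beta> b)) @ drop k ss"
    by (simp only: prefix[symmetric] append_take_drop_id)
  with k b sk that show ?thesis by blast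
qed

lemma path_to_origin_is_wreath_run:
  assumes "run EW ss w" "w \<noteq> []" "hd ss = (q, [])" "last ss = ([], [])"
    "\<forall>i. 0 < i \<and> i < length w \<longrightarrow> ss ! i \<noteq> ([], [])"
  shows "\<exists>y. q @ y \<in> Y \<and> ss = wreath_run \<beta> q y \<and> w = concat (map \<beta> y)"
  using assms
proof (induction w arbitrary: ss q rule: length_induct)
  case (1 w)
  note r = "1.prems"(1) and la = "1.prems"(4) and avoid = "1.prems"(5)
  have l: "length ss = Suc (length w)" using run_length[OF r] .
  have last_state: "ss ! length w = ([], [])" using la nth_length_run[OF r] by simp
  obtain k b q' where k: "0 < k" "k \<le> length w" and b: "take k w = \<beta> b" "(q, b, q') \<in> prefix_edges Y"
    and sk: "ss ! k = (q', [])" and ss: "ss = map (Pair q) (proper_prefixes (\<beta> b)) @ drop k ss"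
    using wreath_path_first_block "1.prems"(1-4) by (metis snd_conv)
  show ?case
  proof (cases "k = length w")
    case True
    then have "q' = []" using sk last_state by simp
    have rest: "drop k ss = [([], [])]"
      using Cons_nth_drop_Suc[of k ss] last_state l True by simp
    have "q @ [b] \<in> Y" using b(2) \<open>q' = []\<close> by (simp add: prefix_edges_iff)
    moreover have "ss = wreath_run \<beta> q [b]" by (subst ss) (simp add: rest)
    ultimately show ?thesis using b(1) True by (intro exI[of _ "[b]"]) simp
  next
    case False
    then have "k < length w" using k(2) by simp
    then have "q' \<noteq> []" using avoid k(1) sk by auto
    then have q': "q' = q @ [b]" using b(2) by (simp add: prefix_edges_iff)
    have "length (drop k w) < length w" using k(1) \<open>k < length w\<close> by simp
    moreover have "run EW (drop k ss) (drop k w)" using run_drop[OF r k(2)] .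
    moreover have "drop k w \<noteq> []" using \<open>k < length w\<close> by simp
    moreover have "hd (drop k ss) = (q @ [b], [])" using sk q' \<open>k < length w\<close> l by (simp add: hd_drop_conv_nth)
    moreover have "last (drop k ss) = ([], [])" using la \<open>k < length w\<close> l by simp
    moreover have "\<forall>i. 0 < i \<and> i < length (drop k w) \<longrightarrow> drop k ss ! i \<noteq> ([], [])"
      using avoid k l by auto
    ultimately obtain y where y: "(q @ [b]) @ y \<in> Y" "drop k ss = wreath_run \<beta> (q @ [b]) y"
        "drop k w = concat (map \<beta> y)"
      using "1.IH" by blast
    have "concat (map \<beta> (b # y)) = take k w @ drop k w" using b(1) y(3) by simp
    then have "w = concat (map \<beta> (b # y))" by simp
    moreover have "ss = wreath_run \<beta> q (b # y)" by (subst ss) (simp add: y(2))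
    ultimately show ?thesis using y(1) by (intro exI[of _ "b # y"]) simp
  qed
qed

lemma first_returns_wreath:
  assumes "x \<noteq> []"
  shows "first_returns EW ([], []) x = wreath_run \<beta> [] ` {y \<in> Y. concat (map \<beta> y) = x}"
proof (intro equalityI subsetI)
  fix ss assume "ss \<in> first_returns EW ([], []) x"
  then have "run EW ss x" "hd ss = ([], [])" "last ss = ([], [])"
    "\<forall>i. 0 < i \<and> i < length x \<longrightarrow> ss ! i \<noteq> ([], [])"
    by (auto simp: first_returns_def returns_def)
  then show "ss \<in> wreath_run \<beta> [] ` {y \<in> Y. concat (map \<beta> y) = x}"
    using path_to_origin_is_wreath_run[of ss x "[]"] assms by auto
next
  fix ss assume "ss \<in> wreath_run \<beta> [] ` {y \<in> Y. concat (map \<beta> y) = x}"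
  then obtain y where y: "y \<in> Y" "concat (map \<beta> y) = x" "ss = wreath_run \<beta> [] y" by auto
  then have "y \<noteq> []" using Nil_notin_Y by auto
  then show "ss \<in> first_returns EW ([], []) x"
    using y run_wreath_run[of "[]" y] hd_wreath_run last_wreath_run wreath_run_avoids_origin
    by (auto simp: first_returns_def returns_def)
qed

lemma card_first_returns_wreath:
  assumes "x \<noteq> []"
  shows "card (first_returns EW ([], []) x) = (if x \<in> compose Y \<beta> then 1 else 0)"
proof (cases "x \<in> compose Y \<beta>")
  case True
  then obtain y where y: "y \<in> Y" "x = concat (map \<beta> y)" unfolding compose_def by auto
  then have "{y \<in> Y. concat (map \<beta> y) = x} = {y}"
    using trim unfolding trim_def inj_on_def by auto
  then show ?thesis using True by (simp add: first_returns_wreath[OF assms])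
next
  case False
  then have none: "{y \<in> Y. concat (map \<beta> y) = x} = {}" unfolding compose_def by auto
  show ?thesis using False unfolding first_returns_wreath[OF assms] none by simp
qed

lemma finite_compose: "finite (compose Y \<beta>)"
  unfolding compose_def using finite_Y by simp

lemma Nil_notin_compose: "[] \<notin> compose Y \<beta>"
proof
  assume "[] \<in> compose Y \<beta>"
  then obtain y where "y \<in> Y" "concat (map \<beta> y) = []" unfolding compose_def by auto
  then show False using Nil_notin_Y beta_not_Nil by (cases y) auto
qed

theorem num_paths_wreath_eq_num_factorizations:
  "num_paths EW ([], []) w ([], []) = num_factorizations (compose Y \<beta>) w"
proof (induction w rule: length_induct)
  case (1 w)
  show ?case
  proof (cases "w = []")
    case True
    have "returns EW ([], []) [] = {[([], [])]}" by (auto simp: returns_def run_Nil_iff)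
    moreover have "{xs. xs \<in> lists (compose Y \<beta>) \<and> concat xs = []} = {[]}"
      using Nil_notin_compose by (auto, metis concat_eq_Nil_conv in_listsD neq_Nil_conv list.set_intros(1))
    ultimately show ?thesis using True by (simp add: num_paths_returns num_factorizations_def)
  next
    case False
    have "num_paths EW ([], []) w ([], []) = (\<Sum>k\<in>{1..length w}.
        card (first_returns EW ([], []) (take k w)) * card (returns EW ([], []) (drop k w)))"
      unfolding num_paths_returns
      by (rule card_returns_first_return_decomposition[OF finite_wreath_runs_from False])
    also have "\<dots> = (\<Sum>k\<in>{1..length w}.
        (if take k w \<in> compose Y \<beta> then 1 else 0) * num_factorizations (compose Y \<beta>) (drop k w))"
      using False "1.IH" by (intro sum.cong) (auto simp: card_first_returns_wreath num_paths_returns[symmetric])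
    also have "\<dots> = num_factorizations (compose Y \<beta>) w"
      using num_factorizations_first_factor[OF finite_compose Nil_notin_compose False] by simp
    finally show ?thesis .
  qed
qed

lemma wreath_run_of_component_runs:
  "run (prefix_edges Z) ps w \<Longrightarrow> run (prefix_edges Y) qs (transducer_output \<beta> ps w) \<Longrightarrow>
   set qs \<subseteq> prefix_states Y \<Longrightarrow>
   \<exists>ss. run EW ss w \<and> hd ss = (hd qs, hd ps) \<and> last ss = (last qs, last ps)"
proof (induction w arbitrary: ps qs)
  case Nil
  then obtain p q where "ps = [p]" "qs = [q]" by (auto simp: run_Nil_iff)
  then show ?case by (intro exI[of _ "[(q, p)]"]) (simp add: run_Nil_iff)
next
  case (Cons a w)
  obtain p p' ps' where ps: "ps = p # p' # ps'"
    using run_length[OF Cons.prems(1)] by (auto simp: length_Suc_conv)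
  have e: "(p, a, p') \<in> prefix_edges Z" and rp: "run (prefix_edges Z) (p' # ps') w"
    using Cons.prems(1) unfolding ps run_Cons_iff by auto
  obtain q qs' where qs: "qs = q # qs'" using run_not_Nil[OF Cons.prems(2)] by (cases qs) auto
  have q: "q \<in> prefix_states Y" using Cons.prems(3) qs by simp
  show ?case
  proof (cases "p' = []")
    case False
    then have "transducer_output \<beta> ps (a # w) = transducer_output \<beta> (p' # ps') w"
      by (simp add: ps)
    then have "run (prefix_edges Y) qs (transducer_output \<beta> (p' # ps') w)"
      using Cons.prems(2) by simp
    then obtain ss where ss: "run EW ss w" "hd ss = (q, p')" "last ss = (last qs, last (p' # ps'))"
      using Cons.IH[OF rp _ Cons.prems(3)] qs by auto
    have "((q, p), a, hd ss) \<in> EW" using e False q by (auto simp: ss(2) prefix_edges_iff wreath_edges_iff)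
    then have "run EW ((q, p) # ss) (a # w)" using ss(1) run_not_Nil[OF ss(1)] by (simp add: run_Cons_iff)
    then show ?thesis using ss run_not_Nil[OF ss(1)] ps qs by (intro exI[of _ "(q, p) # ss"]) auto
  next
    case True
    then have z: "p @ [a] \<in> Z" using e by (simp add: prefix_edges_iff)
    define b where "b = inv \<beta> (p @ [a])"
    have "transducer_output \<beta> ps (a # w) = b # transducer_output \<beta> (p' # ps') w"
      using True by (simp add: ps b_def)
    then have eb: "(q, b, hd qs') \<in> prefix_edges Y"
      and rq: "run (prefix_edges Y) qs' (transducer_output \<beta> (p' # ps') w)"
      using Cons.prems(2) by (auto simp: qs run_Cons_iff)
    have "set qs' \<subseteq> prefix_states Y" using Cons.prems(3) qs by auto
    then obtain ss where ss: "run EW ss w" "hd ss = (hd qs', p')" "last ss = (last qs', last (p' # ps'))"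
      using Cons.IH[OF rp rq] by auto
    have "p \<in> prefix_states Z" using e by (simp add: prefix_edges_iff)
    then have "((q, p), a, hd ss) \<in> EW"
      unfolding ss(2) wreath_edges_iff using True eb beta_inv[OF z] unfolding b_def by metis
    then have "run EW ((q, p) # ss) (a # w)" using ss(1) run_not_Nil[OF ss(1)] by (simp add: run_Cons_iff)
    moreover have "qs' \<noteq> []" using run_not_Nil[OF rq] .
    ultimately show ?thesis using ss run_not_Nil[OF ss(1)] ps qs by (intro exI[of _ "(q, p) # ss"]) auto
  qed
qed

lemma run_wreath_projection: "run EW ss w \<Longrightarrow> run (prefix_edges Z) (map snd ss) w"
  unfolding run_def
proof (intro conjI allI impI; elim conjE)
  fix i assume l: "length ss = Suc (length w)" and steps: "\<forall>i<length w. (ss ! i, w ! i, ss ! Suc i) \<in> EW"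
    and i: "i < length w"
  obtain q p q' p' where s: "ss ! i = (q, p)" "ss ! Suc i = (q', p')" by fastforce
  have "((q, p), w ! i, (q', p')) \<in> EW" using steps i s by metis
  then have "(p, w ! i, p') \<in> prefix_edges Z"
    using beta_in_Z by (auto simp: wreath_edges_iff prefix_edges_iff)
  then show "(map snd ss ! i, w ! i, map snd ss ! Suc i) \<in> prefix_edges Z" using s i l by simp
qed simp

lemma complete_word_has_run:
  assumes "complete Y"
  obtains qs where "run (prefix_edges Y) qs v" "set qs \<subseteq> prefix_states Y"
proof -
  obtain ys u u' where ys: "ys \<in> lists Y" "concat ys = u @ v @ u'"
    using assms unfolding complete_def sublist_def by blast
  let ?qs = "concat (map proper_prefixes ys) @ [[]]"
  have r: "run (prefix_edges Y) (drop (length u) ?qs) (v @ u')"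
    using run_drop[OF run_prefix_edges_concat[OF ys(1)], of "length u"] ys(2) by simp
  have "set ?qs \<subseteq> prefix_states Y"
    using set_concat_proper_prefixes[OF ys(1)] Nil_in_prefix_states_Y by simp
  then have "set (take (Suc (length v)) (drop (length u) ?qs)) \<subseteq> prefix_states Y"
    by (meson order.trans set_drop_subset set_take_subset)
  then show ?thesis using that run_take[OF r, of "length v"] by simp
qed

theorem reduction_onto_prefix_automaton:
  assumes "complete Y"
  shows "reduction snd (prefix_states Y \<times> prefix_states Z) EW ([], []) ([], [])
           (prefix_states Z) (prefix_edges Z) [] []"
  unfolding reduction_def
proof (intro conjI ballI allI)
  show "snd ` (prefix_states Y \<times> prefix_states Z) = prefix_states Z"
    using Nil_in_prefix_states_Y by (auto intro: image_eqI[of _ snd "([], _)"])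
  fix p p' w assume p: "p \<in> prefix_states Z" and p': "p' \<in> prefix_states Z"
  show "has_path (prefix_edges Z) p w p' \<longleftrightarrow>
    (\<exists>s\<in>prefix_states Y \<times> prefix_states Z. \<exists>s'\<in>prefix_states Y \<times> prefix_states Z.
       snd s = p \<and> snd s' = p' \<and> has_path EW s w s')"
  proof
    assume "has_path (prefix_edges Z) p w p'"
    then obtain ps where ps: "run (prefix_edges Z) ps w" "hd ps = p" "last ps = p'"
      unfolding has_path_def by blast
    obtain qs where qs: "run (prefix_edges Y) qs (transducer_output \<beta> ps w)" "set qs \<subseteq> prefix_states Y"
      using complete_word_has_run[OF assms] .
    obtain ss where ss: "run EW ss w" "hd ss = (hd qs, p)" "last ss = (last qs, p')"
      using wreath_run_of_component_runs[OF ps(1) qs] unfolding ps(2,3) by blast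
    have "(hd qs, p) \<in> prefix_states Y \<times> prefix_states Z" "(last qs, p') \<in> prefix_states Y \<times> prefix_states Z"
      using qs(2) run_not_Nil[OF qs(1)] p p' by auto
    moreover have "has_path EW (hd qs, p) w (last qs, p')" unfolding has_path_def using ss by blast
    ultimately show "\<exists>s\<in>prefix_states Y \<times> prefix_states Z. \<exists>s'\<in>prefix_states Y \<times> prefix_states Z.
       snd s = p \<and> snd s' = p' \<and> has_path EW s w s'"
      by force
  next
    assume "\<exists>s\<in>prefix_states Y \<times> prefix_states Z. \<exists>s'\<in>prefix_states Y \<times> prefix_states Z.
       snd s = p \<and> snd s' = p' \<and> has_path EW s w s'"
    then obtain ss where ss: "run EW ss w" "snd (hd ss) = p" "snd (last ss) = p'"
      unfolding has_path_def by (auto 4 3)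
    have "run (prefix_edges Z) (map snd ss) w" using run_wreath_projection[OF ss(1)] .
    moreover have "hd (map snd ss) = p" "last (map snd ss) = p'"
      using ss run_not_Nil[OF ss(1)] by (simp_all add: hd_map last_map)
    ultimately show "has_path (prefix_edges Z) p w p'" unfolding has_path_def by blast
  qed
qed simp_all

end

theorem mainTheorem5:
  fixes Y :: "'b list set" and Z :: "'a list set" and \<beta> :: "'b \<Rightarrow> 'a list"
  assumes "[] \<notin> Y" and "[] \<notin> Z"
    and "composable Y Z \<beta>"
    and "trim Y \<beta>"
  defines "X \<equiv> compose Y \<beta>"
    and "Q \<equiv> prefix_states Y" and "EB \<equiv> prefix_edges Y"
    and "P \<equiv> prefix_states Z" and "ET \<equiv> prefix_transducer_edges \<beta> Z"
    and "EA \<equiv> wreath_edges (prefix_states Y) (prefix_edges Y) (prefix_transducer_edges \<beta> Z)"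
  shows "(\<forall>w. num_paths EA ([], []) w ([], []) = num_factorizations X w)
    \<and> (complete Y \<longrightarrow>
         reduction snd (Q \<times> P) EA ([], []) ([], []) P (prefix_edges Z) [] [])
    \<and> (\<forall>q\<in>Q. \<forall>q'\<in>Q. \<forall>b. (q, b, q') \<in> EB \<longleftrightarrow>
         (\<exists>ss. run EA ss (\<beta> b) \<and> hd ss = (q, []) \<and> last ss = (q', []) \<and>
               (\<forall>i. 0 < i \<and> i < length (\<beta> b) \<longrightarrow> snd (ss ! i) \<noteq> [])))"
proof -
  interpret trim_composition Y Z \<beta>
    using assms(1-4) by unfold_locales
  show ?thesis
    unfolding X_def Q_def EB_def P_def EA_def
    using num_paths_wreath_eq_num_factorizations reduction_onto_prefix_automaton
      prefix_edge_iff_wreath_block_path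
    by blast
qed

end
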